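(* Let $c=7.29$ and $d=5.14$, and let $G=(V,E)$ be the binomial random graph $G(cn, d/n)$. Then asymptotically almost surely the following two properties hold: (i) $|E(G)| = (1+o(1))\, n c^2 d/2 < 137n$; (ii) for every two disjoint sets of vertices $S,T \subseteq V$ with $|S|=|T| = n(c-3)/4$, we have $e(S,T)\neq 0$.
   Context: The binomial random graph $G(N,p)$ is the random graph on vertex set $[N]$ in which each pair $\{i,j\}$ is an edge independently with probability $p$. An event holds asymptotically almost surely (a.a.s.) if its probability tends to $1$ as $n\to\infty$. For disjoint vertex sets $S,T$, $e(S,T)$ denotes the number of edges with one endpoint in $S$ and the other in $T$. Quantities such as $cn$ and $n(c-3)/4$ are treated as integers (rounding is ignored). *)

theory Defs
  imports "HOL-Probability.Probability"
begin

text \<open>Vertex set of G(N,p) is {0..<N}; an edge {i,j} is represented as the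
ordered pair (i,j) with i < j.\<close>

definition vertex_pairs :: "nat \<Rightarrow> (nat \<times> nat) set" where
  "vertex_pairs N = {(i, j). i < j \<and> j < N}"

definition gnp :: "nat \<Rightarrow> real \<Rightarrow> (nat \<times> nat) set pmf" where
  "gnp N p = map_pmf (\<lambda>f. {e \<in> vertex_pairs N. f e})
                     (Pi_pmf (vertex_pairs N) False (\<lambda>_. bernoulli_pmf p))"

definition edges_between :: "(nat \<times> nat) set \<Rightarrow> nat set \<Rightarrow> nat set \<Rightarrow> nat" where
  "edges_between E S T = card {(i, j) \<in> E. (i \<in> S \<and> j \<in> T) \<or> (i \<in> T \<and> j \<in> S)}"

end

theory Submission
  imports Defs
begin

text \<open>The number of edges of G(N, p) is binomial with mean p N (N - 1) / 2, which here is
n c^2 d / 2 up to a bounded error, and variance below its mean; Chebyshev's inequality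
therefore concentrates it, and c^2 d / 2 \<approx> 136.6 < 137.
For the second property take s = b n with b = (c - 3) / 4 and apply the union bound over
pairs of disjoint s-sets: a fixed pair spans no edge with probability at most
(1 - d / n)^(s^2) \<le> exp (- d s^2 / n), and the number of pairs is at most
exp (2 s ln (N / s) + (N - 2 s) ln (N / (N - 2 s))). The resulting bound exp (n \<Phi>) decays
exponentially because \<Phi> < 0 for c = 7.29, d = 5.14, which is checked by rational
estimates of logarithms.\<close>

section \<open>Logarithm estimates\<close>

text \<open>With z n vertices, sets of size x n and edge probability d / n, the expected number of
pairs of disjoint sets spanning no edge is at most exp (n * pair_exponent d z x).\<close>

definition pair_exponent :: "real \<Rightarrow> real \<Rightarrow> real \<Rightarrow> real" where
  "pair_exponent d z x = 2*x * ln (z/x) + (z - 2*x) * ln (z/(z - 2*x)) - d * x^2"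

lemma ln_le_half_diff_inverse:
  fixes t :: real
  assumes "1 \<le> t"
  shows "ln t \<le> (t - 1/t)/2"
proof -
  let ?g = "\<lambda>x::real. (x - 1/x)/2 - ln x"
  have "?g 1 \<le> ?g t"
  proof (rule DERIV_nonneg_imp_nondecreasing[OF assms])
    fix x :: real assume x: "1 \<le> x" "x \<le> t"
    have "DERIV ?g x :> ((1 + 1/x^2)/2 - 1/x)"
      using x by (auto intro!: derivative_eq_intros simp: field_simps power2_eq_square)
    moreover have "(1 + 1/x^2)/2 - 1/x = (1 - 1/x)^2/2"
      using x by (simp add: field_simps power2_eq_square)
    ultimately show "\<exists>y. DERIV ?g x :> y \<and> 0 \<le> y" by auto
  qed
  then show ?thesis by simp
qed

lemma ln_ge_two_diff_div_sum:
  fixes t :: real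
  assumes "1 \<le> t"
  shows "2*(t - 1)/(t + 1) \<le> ln t"
proof -
  let ?g = "\<lambda>x::real. ln x + 4/(x + 1)"
  have "?g 1 \<le> ?g t"
  proof (rule DERIV_nonneg_imp_nondecreasing[OF assms])
    fix x :: real assume x: "1 \<le> x" "x \<le> t"
    have "DERIV ?g x :> (1/x - 4/(x + 1)^2)"
      using x by (auto intro!: derivative_eq_intros simp: power2_eq_square)
    moreover have "4/(x + 1)^2 \<le> 1/x"
      using x zero_le_power2[of "x - 1"] by (simp add: divide_simps power2_eq_square algebra_simps)
    ultimately show "\<exists>y. DERIV ?g x :> y \<and> 0 \<le> y" by auto
  qed
  moreover have "2*(t - 1)/(t + 1) = 2 - 4/(t + 1)" using assms by (simp add: field_simps)
  ultimately show ?thesis by simp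
qed

lemma ln_2_le: "ln (2::real) \<le> 7 * ((16/15 - 15/16)/2) + 5 * ((25/24 - 24/25)/2) + 3 * ((81/80 - 80/81)/2)"
proof -
  have "ln (x^7 * y^5 * z^3) = 7 * ln x + 5 * ln y + 3 * ln z"
    if "x > 0" "y > 0" "z > 0" for x y z :: real
    using that by (simp add: ln_mult ln_realpow)
  from this[of "16/15" "25/24" "81/80"]
  have "ln (2::real) = 7 * ln (16/15) + 5 * ln (25/24) + 3 * ln (81/80)"
    by (simp add: power_divide)
  then show ?thesis
    using ln_le_half_diff_inverse[of "16/15"] ln_le_half_diff_inverse[of "25/24"]
      ln_le_half_diff_inverse[of "81/80"] by simp
qed

lemma pair_exponent_neg: "pair_exponent 5.14 7.29 ((7.29 - 3)/4) < 0"
proof -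
  txt \<open>Both logarithms are combinations of ln 2, ln 3, ln 7 and ln (144/143); the ratios
    49/48 and 256/243 eliminate ln 7 and ln 3, leaving ln 2 and logarithms of numbers close
    to 1, where the elementary bounds above are sharp enough.\<close>
  have ln_monomial: "ln (x^k * y / z^m) = k * ln x + ln y - m * ln z"
    if "x > 0" "y > 0" "z > 0" for x y z :: real and k m :: nat
    using that by (simp add: ln_mult ln_div ln_realpow)
  have l1: "ln (7.29 / 1.0725) = 3 * ln 3 + ln (144/143) - 2 * ln (2::real)"
    using ln_monomial[of 3 "144/143" 2 3 2] by simp
  have l2: "ln (7.29 / 5.145) = 5 * ln 3 + ln 2 - 3 * ln (7::real)"
    using ln_monomial[of 3 2 7 5 3] by simp
  have l3: "ln (49/48) = 2 * ln 7 - ln 3 - 4 * ln (2::real)"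
    using ln_monomial[of 7 "1/3" 2 2 4] by (simp add: ln_div)
  have l4: "ln (256/243) = 8 * ln 2 - 5 * ln (3::real)"
    using ln_monomial[of 2 1 3 8 5] by simp
  have "pair_exponent 5.14 7.29 ((7.29 - 3)/4) = 9.093 * ln 2 - 4.8885 * ln (256/243)
      - 7.7175 * ln (49/48) + 2.145 * ln (144/143) - 5.14 * 1.0725^2"
    unfolding pair_exponent_def l3 l4 using l1 l2 by (simp add: field_simps)
  moreover have "ln (144/143::real) \<le> (144/143 - 143/144)/2"
    using ln_le_half_diff_inverse[of "144/143"] by simp
  moreover have "2*(49/48 - 1)/(49/48 + 1) \<le> ln (49/48::real)"
    by (rule ln_ge_two_diff_div_sum) simp
  moreover have "2*(256/243 - 1)/(256/243 + 1) \<le> ln (256/243::real)"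
    by (rule ln_ge_two_diff_div_sum) simp
  ultimately show ?thesis using ln_2_le by (simp add: power2_eq_square)
qed

section \<open>Binomial distribution\<close>

lemma expectation_binomial_pmf_Suc:
  fixes f :: "nat \<Rightarrow> real"
  assumes p: "p \<in> {0..1}"
  shows "measure_pmf.expectation (binomial_pmf (Suc n) p) f =
     p * measure_pmf.expectation (binomial_pmf n p) (\<lambda>k. f (Suc k)) +
     (1 - p) * measure_pmf.expectation (binomial_pmf n p) f"
proof -
  have eq: "binomial_pmf (Suc n) p =
      bernoulli_pmf p \<bind> (\<lambda>b. map_pmf (\<lambda>k. (if b then 1 else 0) + k) (binomial_pmf n p))"
    using p by (simp add: binomial_pmf_Suc map_pmf_def)
  show ?thesis
    unfolding eq using p
    by (subst pmf_expectation_bind[where A = UNIV])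
       (auto intro!: finite_imageI finite_set_pmf_binomial_pmf simp: UNIV_bool)
qed

lemma expectation_binomial_pmf_real:
  assumes p: "p \<in> {0..1}"
  shows "measure_pmf.expectation (binomial_pmf n p) real = real n * p"
proof (induction n)
  case 0
  then show ?case using p by (simp add: binomial_pmf_0)
next
  case (Suc n)
  have "measure_pmf.expectation (binomial_pmf n p) (\<lambda>k. real k + 1) = real n * p + 1"
    using Suc p by (subst Bochner_Integration.integral_add) auto
  then show ?case using p by (simp add: expectation_binomial_pmf_Suc Suc algebra_simps)
qed

lemma expectation_binomial_pmf_deviation_square:
  assumes p: "p \<in> {0..1}"
  shows "measure_pmf.expectation (binomial_pmf n p) (\<lambda>k. (real k - real n * p)^2) = real n * p * (1 - p)"
proof (induction n)
  case 0
  then show ?case using p by (simp add: binomial_pmf_0)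
next
  case (Suc n)
  let ?E = "measure_pmf.expectation (binomial_pmf n p)"
  have shift: "?E (\<lambda>k. (real k - real n * p)^2 + 2 * a * real k + b)
      = real n * p * (1 - p) + 2 * a * (real n * p) + b" for a b
    using Suc p by (simp add: Bochner_Integration.integral_add expectation_binomial_pmf_real)
  have step: "?E (\<lambda>k. (real (Suc k) - real (Suc n) * p)^2)
      = ?E (\<lambda>k. (real k - real n * p)^2 + 2 * (1 - p) * real k + ((1 - p)^2 - 2 * (1 - p) * real n * p))"
    by (rule Bochner_Integration.integral_cong) (auto simp: power2_eq_square algebra_simps)
  have stay: "?E (\<lambda>k. (real k - real (Suc n) * p)^2)
      = ?E (\<lambda>k. (real k - real n * p)^2 + 2 * (- p) * real k + (p^2 + 2 * p * real n * p))"
    by (rule Bochner_Integration.integral_cong) (auto simp: power2_eq_square algebra_simps)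
  show ?case
    unfolding expectation_binomial_pmf_Suc[OF p] step stay shift
    by (simp add: power2_eq_square algebra_simps)
qed

lemma prob_binomial_pmf_deviation_ge:
  assumes p: "p \<in> {0..1}" and t: "t > 0"
  shows "measure_pmf.prob (binomial_pmf m p) {k. t \<le> \<bar>real k - real m * p\<bar>} \<le> real m * p * (1 - p) / t^2"
  using measure_pmf.Chebyshev_inequality[of real "binomial_pmf m p" t] p t
  by (simp add: expectation_binomial_pmf_real expectation_binomial_pmf_deviation_square)

section \<open>The number of edges of G(N, p)\<close>

lemma finite_vertex_pairs: "finite (vertex_pairs N)"
  by (rule finite_subset[of _ "{..<N} \<times> {..<N}"]) (auto simp: vertex_pairs_def)

lemma card_vertex_pairs: "2 * card (vertex_pairs N) = N * (N - 1)"
proof (induction N)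
  case 0
  then show ?case by (simp add: vertex_pairs_def)
next
  case (Suc N)
  have "vertex_pairs (Suc N) = vertex_pairs N \<union> (\<lambda>i. (i, N)) ` {..<N}"
    and "vertex_pairs N \<inter> (\<lambda>i. (i, N)) ` {..<N} = {}"
    by (auto simp: vertex_pairs_def)
  then have "card (vertex_pairs (Suc N)) = card (vertex_pairs N) + N"
    by (simp add: card_Un_disjoint finite_vertex_pairs card_image inj_on_def)
  then show ?case using Suc by (cases N) (auto simp: algebra_simps)
qed

lemma card_vertex_pairs_floor_bounds:
  fixes x :: real
  assumes "2 \<le> x"
  shows "(x - 1) * (x - 2) / 2 \<le> real (card (vertex_pairs (nat \<lfloor>x\<rfloor>)))"
    and "real (card (vertex_pairs (nat \<lfloor>x\<rfloor>))) \<le> x^2 / 2"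
proof -
  define N where "N = nat \<lfloor>x\<rfloor>"
  have N: "x - 1 < real N" "real N \<le> x" "1 \<le> N"
    using assms unfolding N_def by linarith+
  have "2 * real (card (vertex_pairs N)) = real N * (real N - 1)"
    using arg_cong[OF card_vertex_pairs[of N], of real] N(3) by (simp add: of_nat_diff)
  moreover have "(x - 1) * (x - 2) \<le> real N * (real N - 1)"
    using N assms by (intro mult_mono) auto
  moreover have "real N * (real N - 1) \<le> x * x"
    using N by (intro mult_mono) auto
  ultimately show "(x - 1) * (x - 2) / 2 \<le> real (card (vertex_pairs (nat \<lfloor>x\<rfloor>)))"
    and "real (card (vertex_pairs (nat \<lfloor>x\<rfloor>))) \<le> x^2 / 2"
    unfolding N_def power2_eq_square by linarith+
qed

lemma map_pmf_card_gnp: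
  assumes "p \<in> {0..1}"
  shows "map_pmf card (gnp N p) = binomial_pmf (card (vertex_pairs N)) p"
  unfolding gnp_def map_pmf_comp
  by (rule binomial_pmf_altdef'[symmetric]) (use assms finite_vertex_pairs in auto)

lemma prob_gnp_edge_count_deviation_le:
  fixes c d \<kappa> :: real and n :: nat
  assumes c: "c > 0" and d: "d > 0" and \<kappa>: "\<kappa> > 0"
    and n: "d \<le> real n" "2 \<le> c * real n" "3 * c * d \<le> \<kappa> * real n"
  shows "measure_pmf.prob (gnp (nat \<lfloor>c * real n\<rfloor>) (d / real n))
           {E. \<kappa> * real n \<le> \<bar>real (card E) - real n * c^2 * d / 2\<bar>}
         \<le> 2 * c^2 * d / (\<kappa>^2 * real n)"
proof -
  define m where "m = card (vertex_pairs (nat \<lfloor>c * real n\<rfloor>))"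
  define p where "p = d / real n"
  have n0: "real n > 0" using n d by linarith
  have p: "p \<in> {0..1}" using n d n0 by (simp add: p_def)
  have "real m * p \<le> (c * real n)^2 / 2 * p"
    using card_vertex_pairs_floor_bounds(2)[OF n(2)] p by (intro mult_right_mono) (auto simp: m_def)
  also have "\<dots> = real n * c^2 * d / 2"
    using n0 by (simp add: p_def power2_eq_square field_simps)
  finally have mean_le: "real m * p \<le> real n * c^2 * d / 2" .
  have "real n * c^2 * d / 2 - 3 * c * d / 2 \<le> (c * real n - 1) * (c * real n - 2) / 2 * p"
    using n0 d by (simp add: p_def power2_eq_square field_simps)
  also have "\<dots> \<le> real m * p"
    using card_vertex_pairs_floor_bounds(1)[OF n(2)] p by (intro mult_right_mono) (auto simp: m_def)
  finally have mean: "\<bar>real m * p - real n * c^2 * d / 2\<bar> \<le> \<kappa> * real n / 2"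
    using mean_le n(3) by linarith
  have "measure_pmf.prob (gnp (nat \<lfloor>c * real n\<rfloor>) p)
          {E. \<kappa> * real n \<le> \<bar>real (card E) - real n * c^2 * d / 2\<bar>}
      = measure_pmf.prob (binomial_pmf m p) {k. \<kappa> * real n \<le> \<bar>real k - real n * c^2 * d / 2\<bar>}"
    by (simp add: map_pmf_card_gnp[OF p, symmetric] m_def vimage_def)
  also have "\<dots> \<le> measure_pmf.prob (binomial_pmf m p) {k. \<kappa> * real n / 2 \<le> \<bar>real k - real m * p\<bar>}"
    using mean by (intro measure_pmf.finite_measure_mono) (auto simp: abs_if split: if_splits)
  also have "\<dots> \<le> real m * p * (1 - p) / (\<kappa> * real n / 2)^2"
    using \<kappa> n0 p by (intro prob_binomial_pmf_deviation_ge) auto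
  also have "\<dots> \<le> (real n * c^2 * d / 2) / (\<kappa> * real n / 2)^2"
  proof (intro divide_right_mono)
    have "real m * p * (1 - p) \<le> real m * p" using p by (simp add: mult_left_le)
    then show "real m * p * (1 - p) \<le> real n * c^2 * d / 2" using mean_le by linarith
  qed simp
  also have "\<dots> = 2 * c^2 * d / (\<kappa>^2 * real n)"
    using n0 by (simp add: power2_eq_square field_simps)
  finally show ?thesis unfolding p_def .
qed

lemma prob_gnp_edge_count_deviation_tendsto_0:
  fixes c d \<kappa> :: real
  assumes c: "c > 0" and d: "d > 0" and \<kappa>: "\<kappa> > 0"
  shows "(\<lambda>n. measure_pmf.prob (gnp (nat \<lfloor>c * real n\<rfloor>) (d / real n))
           {E. \<kappa> * real n \<le> \<bar>real (card E) - real n * c^2 * d / 2\<bar>}) \<longlonglongrightarrow> 0"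
proof (rule tendsto_sandwich[of "\<lambda>_. 0" _ _ "\<lambda>n. 2 * c^2 * d / (\<kappa>^2 * real n)"])
  have "\<forall>\<^sub>F n in sequentially. max d (max (2 / c) (3 * c * d / \<kappa>)) \<le> real n"
    using filterlim_real_sequentially unfolding filterlim_at_top by blast
  then show "\<forall>\<^sub>F n in sequentially. measure_pmf.prob (gnp (nat \<lfloor>c * real n\<rfloor>) (d / real n))
           {E. \<kappa> * real n \<le> \<bar>real (card E) - real n * c^2 * d / 2\<bar>} \<le> 2 * c^2 * d / (\<kappa>^2 * real n)"
  proof eventually_elim
    case (elim n)
    then have "d \<le> real n" "2 \<le> c * real n" "3 * c * d \<le> \<kappa> * real n"
      using c \<kappa> by (auto simp: field_simps)
    from prob_gnp_edge_count_deviation_le[OF c d \<kappa> this] show ?case by simp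
  qed
  show "(\<lambda>n. 2 * c^2 * d / (\<kappa>^2 * real n)) \<longlonglongrightarrow> 0"
    using lim_const_over_n[of "2 * c^2 * d / \<kappa>^2"] by simp
qed auto

section \<open>Edges between disjoint sets\<close>

definition disjoint_sets_joined :: "nat \<Rightarrow> nat \<Rightarrow> (nat \<times> nat) set \<Rightarrow> bool" where
  "disjoint_sets_joined N s E \<longleftrightarrow>
     (\<forall>S T. S \<subseteq> {0..<N} \<and> T \<subseteq> {0..<N} \<and> S \<inter> T = {} \<and> card S = s \<and> card T = s
        \<longrightarrow> edges_between E S T \<noteq> 0)"

lemma card_mult_le_card_vertex_pairs_between:
  assumes "S \<subseteq> {0..<N}" "T \<subseteq> {0..<N}" "S \<inter> T = {}"
  shows "card S * card T \<le> card {(i, j) \<in> vertex_pairs N. (i \<in> S \<and> j \<in> T) \<or> (i \<in> T \<and> j \<in> S)}"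
proof -
  have "inj_on (\<lambda>(u, v). (min u v, max u v)) (S \<times> T)"
    using assms(3) by (auto simp: inj_on_def min_def max_def split: if_splits)
  moreover have "(\<lambda>(u, v). (min u v, max u v)) ` (S \<times> T)
      \<subseteq> {(i, j) \<in> vertex_pairs N. (i \<in> S \<and> j \<in> T) \<or> (i \<in> T \<and> j \<in> S)}"
  proof (rule image_subsetI)
    fix x assume "x \<in> S \<times> T"
    then obtain u v where "x = (u, v)" "u \<in> S" "v \<in> T" by blast
    moreover from this assms have "u < N" "v < N" "u \<noteq> v" by auto
    ultimately show "(\<lambda>(u, v). (min u v, max u v)) x
        \<in> {(i, j) \<in> vertex_pairs N. (i \<in> S \<and> j \<in> T) \<or> (i \<in> T \<and> j \<in> S)}"
      by (auto simp: vertex_pairs_def min_def max_def)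
  qed
  ultimately have "card (S \<times> T) \<le> card {(i, j) \<in> vertex_pairs N. (i \<in> S \<and> j \<in> T) \<or> (i \<in> T \<and> j \<in> S)}"
    by (intro card_inj_on_le) (auto intro: finite_subset[OF _ finite_vertex_pairs])
  then show ?thesis by (simp add: card_cartesian_product)
qed

lemma prob_gnp_no_edges_between:
  assumes ST: "S \<subseteq> {0..<N}" "T \<subseteq> {0..<N}" "S \<inter> T = {}" and p: "p \<in> {0..1}"
  shows "measure_pmf.prob (gnp N p) {E. edges_between E S T = 0} \<le> (1 - p) ^ (card S * card T)"
proof -
  define X where "X = {(i, j) \<in> vertex_pairs N. (i \<in> S \<and> j \<in> T) \<or> (i \<in> T \<and> j \<in> S)}"
  define B where "B = (\<lambda>e. if e \<in> X then {False} else UNIV)"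
  have X_sub: "X \<subseteq> vertex_pairs N" by (auto simp: X_def)
  have fin: "finite {(i, j) \<in> {e \<in> vertex_pairs N. f e}. (i \<in> S \<and> j \<in> T) \<or> (i \<in> T \<and> j \<in> S)}" for f
    by (rule finite_subset[OF _ finite_vertex_pairs]) auto
  have "measure_pmf.prob (gnp N p) {E. edges_between E S T = 0}
      = measure_pmf.prob (Pi_pmf (vertex_pairs N) False (\<lambda>_. bernoulli_pmf p))
          ((\<lambda>f. {e \<in> vertex_pairs N. f e}) -` {E. edges_between E S T = 0})"
    unfolding gnp_def by (simp add: measure_map_pmf)
  also have "\<dots> \<le> measure_pmf.prob (Pi_pmf (vertex_pairs N) False (\<lambda>_. bernoulli_pmf p)) (Pi (vertex_pairs N) B)"
    using fin by (intro measure_pmf.finite_measure_mono) (auto simp: edges_between_def B_def X_def)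
  also have "\<dots> = (\<Prod>e\<in>vertex_pairs N. measure_pmf.prob (bernoulli_pmf p) (B e))"
    by (rule measure_Pi_pmf_Pi[OF finite_vertex_pairs])
  also have "\<dots> = (\<Prod>e\<in>vertex_pairs N. if e \<in> X then 1 - p else 1)"
    using p by (intro prod.cong) (auto simp: B_def measure_pmf_single)
  also have "\<dots> = (1 - p) ^ card X"
    using X_sub by (simp add: prod.If_cases finite_vertex_pairs Int_absorb1)
  also have "\<dots> \<le> (1 - p) ^ (card S * card T)"
    using p card_mult_le_card_vertex_pairs_between[OF ST] by (intro power_decreasing) (auto simp: X_def)
  finally show ?thesis .
qed

lemma prob_gnp_not_disjoint_sets_joined_le:
  assumes p: "p \<in> {0..1}"
  shows "measure_pmf.prob (gnp N p) {E. \<not> disjoint_sets_joined N s E}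
           \<le> real (N choose s) * real ((N - s) choose s) * (1 - p) ^ (s * s)"
proof -
  define P where "P = Sigma {S. S \<subseteq> {0..<N} \<and> card S = s} (\<lambda>S. {T. T \<subseteq> {0..<N} - S \<and> card T = s})"
  have "card P = (\<Sum>S | S \<subseteq> {0..<N} \<and> card S = s. card {T. T \<subseteq> {0..<N} - S \<and> card T = s})"
    unfolding P_def by (rule card_SigmaI) auto
  also have "\<dots> = (\<Sum>S | S \<subseteq> {0..<N} \<and> card S = s. (N - s) choose s)"
    by (intro sum.cong refl) (auto simp: n_subsets card_Diff_subset finite_subset)
  finally have card_P: "card P = (N choose s) * ((N - s) choose s)"
    by (simp add: n_subsets)
  define A where "A = (\<lambda>(S, T). {E. edges_between E S T = 0})"
  have "{E. \<not> disjoint_sets_joined N s E} \<subseteq> \<Union>(A ` P)"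
  proof
    fix E assume "E \<in> {E. \<not> disjoint_sets_joined N s E}"
    then obtain S T where "S \<subseteq> {0..<N}" "T \<subseteq> {0..<N}" "S \<inter> T = {}" "card S = s" "card T = s"
        and "edges_between E S T = 0"
      by (auto simp: disjoint_sets_joined_def)
    then show "E \<in> \<Union>(A ` P)"
      unfolding P_def A_def by blast
  qed
  then have "measure_pmf.prob (gnp N p) {E. \<not> disjoint_sets_joined N s E}
      \<le> measure_pmf.prob (gnp N p) (\<Union>(A ` P))"
    by (intro measure_pmf.finite_measure_mono) auto
  also have "\<dots> \<le> (\<Sum>x\<in>P. measure_pmf.prob (gnp N p) (A x))"
    unfolding P_def by (intro measure_pmf.finite_measure_subadditive_finite) auto
  also have "\<dots> \<le> (\<Sum>x\<in>P. (1 - p) ^ (s * s))"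
  proof (rule sum_mono)
    fix x assume "x \<in> P"
    then obtain S T where "x = (S, T)" "S \<subseteq> {0..<N}" "T \<subseteq> {0..<N}" "S \<inter> T = {}"
        "card S = s" "card T = s"
      by (auto simp: P_def)
    then show "measure_pmf.prob (gnp N p) (A x) \<le> (1 - p) ^ (s * s)"
      using prob_gnp_no_edges_between[OF _ _ _ p] by (metis A_def case_prod_conv)
  qed
  also have "\<dots> = real (N choose s) * real ((N - s) choose s) * (1 - p) ^ (s * s)"
    by (simp add: card_P)
  finally show ?thesis .
qed

lemma binomial_term_le_power:
  fixes a b :: real
  assumes "0 \<le> a" "0 \<le> b" "k \<le> m"
  shows "real (m choose k) * a^k * b^(m - k) \<le> (a + b)^m"
proof -
  have "real (m choose k) * a^k * b^(m - k) \<le> (\<Sum>j\<le>m. real (m choose j) * a^j * b^(m - j))"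
    by (rule member_le_sum) (use assms in auto)
  then show ?thesis by (simp add: binomial_ring)
qed

lemma choose_mult_choose_le_exp:
  assumes s: "0 < s" and N: "2 * s < N"
  shows "real (N choose s) * real ((N - s) choose s)
           \<le> exp (2 * real s * ln (real N / real s) + real (N - 2 * s) * ln (real N / real (N - 2 * s)))"
proof -
  define r where "r = N - 2 * s"
  have r: "0 < r" "N = 2 * s + r" using N by (auto simp: r_def)
  have outer: "real (N choose s) * real s^s * real (N - s)^(N - s) \<le> real N ^ N"
    using binomial_term_le_power[of "real s" "real (N - s)" s N] r by (simp add: of_nat_diff)
  have inner: "real ((N - s) choose s) * real s^s * real r^r \<le> real (N - s) ^ (N - s)"
    using binomial_term_le_power[of "real s" "real r" s "N - s"] r by (simp add: of_nat_diff)
  have split_powers: "real N ^ N = real N ^ (2 * s) * real N ^ r" "real s ^ (2 * s) = real s^s * real s^s"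
    by (metis r(2) power_add, metis mult_2 power_add)
  have chain: "a * b * (x * x * y) \<le> m" if "a * x * z \<le> m" "b * x * y \<le> z" "0 \<le> a * x"
    for a b x y z m :: real
  proof -
    have "a * b * (x * x * y) = (a * x) * (b * x * y)" by (simp add: ac_simps)
    also have "\<dots> \<le> (a * x) * z" using that(2,3) by (rule mult_left_mono)
    finally show ?thesis using that(1) by simp
  qed
  have "real (N choose s) * real ((N - s) choose s) * (real s^s * real s^s * real r^r) \<le> real N ^ N"
    by (rule chain[OF outer inner]) simp
  moreover have "0 < real s^s * real s^s * real r^r" using s r by simp
  ultimately have "real (N choose s) * real ((N - s) choose s) \<le> real N ^ N / (real s^s * real s^s * real r^r)"
    by (simp only: pos_le_divide_eq)
  also have "\<dots> = real N ^ (2 * s) / real s ^ (2 * s) * (real N ^ r / real r ^ r)"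
    using split_powers by simp
  also have "\<dots> = (real N / real s) ^ (2 * s) * (real N / real r) ^ r"
    by (simp only: power_divide)
  also have "\<dots> = exp (2 * real s * ln (real N / real s) + real r * ln (real N / real r))"
  proof -
    have exp_ln_power: "exp (real k * ln y) = y ^ k" if "y > 0" for y :: real and k :: nat
      using that by (subst ln_realpow[symmetric]) auto
    show ?thesis
      using exp_ln_power[of "real N / real s" "2 * s"] exp_ln_power[of "real N / real r" r] s r(1) N
      by (simp add: exp_add)
  qed
  finally show ?thesis unfolding r_def .
qed

lemma prob_gnp_not_disjoint_sets_joined_le_exp:
  fixes d :: real and n N s :: nat
  assumes d: "0 < d" "d \<le> real n" and s: "0 < s" "2 * s < N"
  shows "measure_pmf.prob (gnp N (d / real n)) {E. \<not> disjoint_sets_joined N s E}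
           \<le> exp (real n * pair_exponent d (real N / real n) (real s / real n))"
proof -
  define p where "p = d / real n"
  have n: "real n > 0" using d by linarith
  have p: "p \<in> {0..1}" using d n by (simp add: p_def)
  have "(1 - p) ^ (s * s) \<le> exp (- p) ^ (s * s)"
    using p exp_minus_ge[of p] by (intro power_mono) auto
  also have "\<dots> = exp (- p * (real s * real s))"
    by (simp add: exp_of_nat_mult[symmetric] algebra_simps)
  finally have non_edges: "(1 - p) ^ (s * s) \<le> exp (- p * (real s * real s))" .
  have rescale: "(real N / real n) / (real s / real n) = real N / real s"
      "real N / real n - 2 * (real s / real n) = real (N - 2 * s) / real n"
      "(real N / real n) / (real (N - 2 * s) / real n) = real N / real (N - 2 * s)"
    using n s(2) by (simp_all add: of_nat_diff field_simps)
  have exponent: "real n * pair_exponent d (real N / real n) (real s / real n)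
      = 2 * real s * ln (real N / real s) + real (N - 2 * s) * ln (real N / real (N - 2 * s))
        - p * (real s * real s)"
    unfolding pair_exponent_def rescale using n by (simp add: p_def power2_eq_square algebra_simps)
  have "measure_pmf.prob (gnp N p) {E. \<not> disjoint_sets_joined N s E}
      \<le> real (N choose s) * real ((N - s) choose s) * (1 - p) ^ (s * s)"
    by (rule prob_gnp_not_disjoint_sets_joined_le[OF p])
  also have "\<dots> \<le> exp (2 * real s * ln (real N / real s) + real (N - 2 * s) * ln (real N / real (N - 2 * s)))
        * exp (- p * (real s * real s))"
    using p by (intro mult_mono choose_mult_choose_le_exp[OF s] non_edges) auto
  also have "\<dots> = exp (real n * pair_exponent d (real N / real n) (real s / real n))"
    unfolding exponent by (simp add: exp_add[symmetric])
  finally show ?thesis unfolding p_def .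
qed

lemma tendsto_nat_floor_mult_div:
  fixes b :: real
  assumes "0 \<le> b"
  shows "(\<lambda>n. real (nat \<lfloor>real n * b\<rfloor>) / real n) \<longlonglongrightarrow> b"
proof (rule tendsto_sandwich[of "\<lambda>n. b - 1 / real n" _ _ "\<lambda>_. b"])
  have "b - 1 / real n \<le> real (nat \<lfloor>real n * b\<rfloor>) / real n \<and> real (nat \<lfloor>real n * b\<rfloor>) / real n \<le> b"
    if "0 < n" for n :: nat
  proof -
    have "real (nat \<lfloor>real n * b\<rfloor>) = of_int \<lfloor>real n * b\<rfloor>"
      using assms by simp
    then have "real n * b - 1 \<le> real (nat \<lfloor>real n * b\<rfloor>)" "real (nat \<lfloor>real n * b\<rfloor>) \<le> real n * b"
      by linarith+
    moreover have "b - 1 / real n = (real n * b - 1) / real n" "b = real n * b / real n"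
      using that by (simp_all add: field_simps)
    ultimately show ?thesis
      using that by (metis divide_right_mono of_nat_0_le_iff)
  qed
  then show "\<forall>\<^sub>F n in sequentially. b - 1 / real n \<le> real (nat \<lfloor>real n * b\<rfloor>) / real n"
    and "\<forall>\<^sub>F n in sequentially. real (nat \<lfloor>real n * b\<rfloor>) / real n \<le> b"
    by (auto intro: eventually_mono[OF eventually_gt_at_top[of 0]])
  show "(\<lambda>n. b - 1 / real n) \<longlonglongrightarrow> b"
    using tendsto_diff[OF tendsto_const lim_const_over_n[of 1], of b] by simp
qed simp

lemma prob_gnp_not_disjoint_sets_joined_tendsto_0:
  fixes b c d :: real
  assumes d: "0 < d" and b: "0 < b" "2 * b < c" and neg: "pair_exponent d c b < 0"
  shows "(\<lambda>n. measure_pmf.prob (gnp (nat \<lfloor>c * real n\<rfloor>) (d / real n))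
           {E. \<not> disjoint_sets_joined (nat \<lfloor>c * real n\<rfloor>) (nat \<lfloor>real n * b\<rfloor>) E}) \<longlonglongrightarrow> 0"
proof -
  define x where "x n = real (nat \<lfloor>real n * b\<rfloor>) / real n" for n :: nat
  define z where "z n = real (nat \<lfloor>c * real n\<rfloor>) / real n" for n :: nat
  have x: "x \<longlonglongrightarrow> b" unfolding x_def using b by (intro tendsto_nat_floor_mult_div) simp
  have z: "z \<longlonglongrightarrow> c" unfolding z_def using tendsto_nat_floor_mult_div[of c] b by (simp add: mult.commute)
  have zx: "(\<lambda>n. z n - 2 * x n) \<longlonglongrightarrow> c - 2 * b" by (intro tendsto_intros z x)
  have "(\<lambda>n. pair_exponent d (z n) (x n)) \<longlonglongrightarrow> pair_exponent d c b"
    unfolding pair_exponent_def using b by (intro tendsto_intros x z zx) auto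
  then have "\<forall>\<^sub>F n in sequentially. pair_exponent d (z n) (x n) < pair_exponent d c b / 2"
    using neg by (intro order_tendstoD(2)) auto
  moreover have "\<forall>\<^sub>F n in sequentially. 0 < x n"
    using b by (intro order_tendstoD(1)[OF x]) simp
  moreover have "\<forall>\<^sub>F n in sequentially. 0 < z n - 2 * x n"
    using b by (intro order_tendstoD(1)[OF zx]) simp
  moreover have "\<forall>\<^sub>F n in sequentially. d \<le> real n"
    using filterlim_real_sequentially unfolding filterlim_at_top by blast
  ultimately have bound: "\<forall>\<^sub>F n in sequentially.
      measure_pmf.prob (gnp (nat \<lfloor>c * real n\<rfloor>) (d / real n))
        {E. \<not> disjoint_sets_joined (nat \<lfloor>c * real n\<rfloor>) (nat \<lfloor>real n * b\<rfloor>) E}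
      \<le> exp (pair_exponent d c b / 2) ^ n"
  proof eventually_elim
    case (elim n)
    then have n: "0 < real n" using d by linarith
    define s where "s = nat \<lfloor>real n * b\<rfloor>"
    define N where "N = nat \<lfloor>c * real n\<rfloor>"
    have "x n = real s / real n" "z n - 2 * x n = (real N - 2 * real s) / real n"
      unfolding x_def z_def s_def N_def by (simp_all add: diff_divide_distrib)
    then have "0 < s" "2 * s < N"
      using elim(2,3) n by (simp_all add: zero_less_divide_iff)
    from prob_gnp_not_disjoint_sets_joined_le_exp[OF d elim(4) this]
    have "measure_pmf.prob (gnp (nat \<lfloor>c * real n\<rfloor>) (d / real n))
        {E. \<not> disjoint_sets_joined (nat \<lfloor>c * real n\<rfloor>) (nat \<lfloor>real n * b\<rfloor>) E}
      \<le> exp (real n * pair_exponent d (z n) (x n))"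
      by (simp add: x_def z_def s_def N_def)
    also have "\<dots> \<le> exp (real n * (pair_exponent d c b / 2))"
      using elim(1) n by (simp add: mult_left_mono)
    also have "\<dots> = exp (pair_exponent d c b / 2) ^ n"
      by (rule exp_of_nat_mult)
    finally show ?case .
  qed
  have "(\<lambda>n. exp (pair_exponent d c b / 2) ^ n) \<longlonglongrightarrow> 0"
    using neg by (intro LIMSEQ_power_zero) simp
  then show ?thesis
    by (intro tendsto_sandwich[OF _ bound tendsto_const]) simp_all
qed

lemma prob_tendsto_1_off_vanishing_events:
  fixes M :: "nat \<Rightarrow> 'a pmf"
  assumes A: "(\<lambda>n. measure_pmf.prob (M n) (A n)) \<longlonglongrightarrow> 0"
    and B: "(\<lambda>n. measure_pmf.prob (M n) (B n)) \<longlonglongrightarrow> 0"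
    and cover: "\<And>n. - (A n \<union> B n) \<subseteq> C n"
  shows "(\<lambda>n. measure_pmf.prob (M n) (C n)) \<longlonglongrightarrow> 1"
proof (rule tendsto_sandwich[of "\<lambda>n. 1 - measure_pmf.prob (M n) (A n) - measure_pmf.prob (M n) (B n)"
      _ _ "\<lambda>_. 1"])
  show "\<forall>\<^sub>F n in sequentially.
      1 - measure_pmf.prob (M n) (A n) - measure_pmf.prob (M n) (B n) \<le> measure_pmf.prob (M n) (C n)"
  proof (intro always_eventually allI)
    fix n
    have "measure_pmf.prob (M n) (A n \<union> B n) \<le> measure_pmf.prob (M n) (A n) + measure_pmf.prob (M n) (B n)"
      by (rule measure_subadditive) (auto simp: measure_pmf.emeasure_eq_measure)
    then have "1 - measure_pmf.prob (M n) (A n) - measure_pmf.prob (M n) (B n)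
        \<le> 1 - measure_pmf.prob (M n) (A n \<union> B n)"
      by simp
    also have "\<dots> = measure_pmf.prob (M n) (- (A n \<union> B n))"
      using measure_pmf.prob_compl[of "A n \<union> B n" "M n"] by (simp add: Compl_eq_Diff_UNIV)
    also have "\<dots> \<le> measure_pmf.prob (M n) (C n)"
      using cover by (intro measure_pmf.finite_measure_mono) auto
    finally show "1 - measure_pmf.prob (M n) (A n) - measure_pmf.prob (M n) (B n) \<le> measure_pmf.prob (M n) (C n)" .
  qed
  show "(\<lambda>n. 1 - measure_pmf.prob (M n) (A n) - measure_pmf.prob (M n) (B n)) \<longlonglongrightarrow> 1"
    using tendsto_diff[OF tendsto_diff[OF tendsto_const A] B, of 1] by simp
qed auto

lemma prob_gnp_edge_count_and_disjoint_sets_joined_tendsto_1: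
  fixes b c d K \<epsilon> :: real
  assumes c: "0 < c" and d: "0 < d" and K: "c^2 * d / 2 < K" and \<epsilon>: "0 < \<epsilon>"
    and b: "0 < b" "2 * b < c" and neg: "pair_exponent d c b < 0"
  shows "(\<lambda>n. measure_pmf.prob (gnp (nat \<lfloor>c * real n\<rfloor>) (d / real n))
           {E. \<bar>real (card E) - real n * c^2 * d / 2\<bar> \<le> \<epsilon> * (real n * c^2 * d / 2)
               \<and> real (card E) < K * real n
               \<and> disjoint_sets_joined (nat \<lfloor>c * real n\<rfloor>) (nat \<lfloor>real n * b\<rfloor>) E}) \<longlonglongrightarrow> 1"
proof -
  define \<kappa> where "\<kappa> = min (\<epsilon> * (c^2 * d / 2)) (K - c^2 * d / 2)"
  have \<kappa>: "0 < \<kappa>" using c d K \<epsilon> unfolding \<kappa>_def by simp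
  show ?thesis
  proof (rule prob_tendsto_1_off_vanishing_events[OF
        prob_gnp_edge_count_deviation_tendsto_0[OF c d \<kappa>]
        prob_gnp_not_disjoint_sets_joined_tendsto_0[OF d b neg]])
    fix n :: nat
    have "\<kappa> * real n \<le> \<epsilon> * (c^2 * d / 2) * real n" "\<kappa> * real n \<le> (K - c^2 * d / 2) * real n"
      unfolding \<kappa>_def by (rule mult_right_mono[OF min.cobounded1] mult_right_mono[OF min.cobounded2], simp)+
    then have "\<kappa> * real n \<le> \<epsilon> * (real n * c^2 * d / 2)" "\<kappa> * real n \<le> K * real n - real n * c^2 * d / 2"
      by (simp_all add: algebra_simps)
    then show "- ({E. \<kappa> * real n \<le> \<bar>real (card E) - real n * c^2 * d / 2\<bar>}
          \<union> {E. \<not> disjoint_sets_joined (nat \<lfloor>c * real n\<rfloor>) (nat \<lfloor>real n * b\<rfloor>) E})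
        \<subseteq> {E. \<bar>real (card E) - real n * c^2 * d / 2\<bar> \<le> \<epsilon> * (real n * c^2 * d / 2)
               \<and> real (card E) < K * real n
               \<and> disjoint_sets_joined (nat \<lfloor>c * real n\<rfloor>) (nat \<lfloor>real n * b\<rfloor>) E}"
      by auto
  qed
qed

theorem lemma2p2:
  fixes c d :: real
  assumes "c = 7.29" and "d = 5.14"
  shows "\<forall>\<epsilon>>0. (\<lambda>n::nat.
     measure_pmf.prob (gnp (nat \<lfloor>c * real n\<rfloor>) (d / real n))
       {E. \<bar>real (card E) - real n * c\<^sup>2 * d / 2\<bar> \<le> \<epsilon> * (real n * c\<^sup>2 * d / 2)
           \<and> real (card E) < 137 * real n
           \<and> (\<forall>S T. S \<subseteq> {0..<nat \<lfloor>c * real n\<rfloor>} \<and> T \<subseteq> {0..<nat \<lfloor>c * real n\<rfloor>}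
                  \<and> S \<inter> T = {}
                  \<and> card S = nat \<lfloor>real n * (c - 3) / 4\<rfloor>
                  \<and> card T = nat \<lfloor>real n * (c - 3) / 4\<rfloor>
                  \<longrightarrow> edges_between E S T \<noteq> 0)})
     \<longlonglongrightarrow> 1"
proof -
  have "0 < c" "0 < d" "c^2 * d / 2 < 137" "0 < (c - 3) / 4" "2 * ((c - 3) / 4) < c"
    unfolding assms by (simp_all add: power2_eq_square)
  moreover have "pair_exponent d c ((c - 3) / 4) < 0"
    unfolding assms by (rule pair_exponent_neg)
  ultimately show ?thesis
    using prob_gnp_edge_count_and_disjoint_sets_joined_tendsto_1[of c d 137 _ "(c - 3) / 4"]
    unfolding disjoint_sets_joined_def times_divide_eq_right by blast
qed

end
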